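(* Let $(B,\mathfrak{m})$ be a deformation base, $X$ a vector space and $Y\subseteq B\widehat{\otimes}X$ a pseudoclosed $B$-submodule. Then $BY=B\cdot Y$ and $\mathfrak{m}^kY=\mathfrak{m}^k\cdot Y$ for every $k$.
   Context: Deformation base: complete local Noetherian unital $\mathbb{C}$-algebra $B$ with maximal ideal $\mathfrak{m}$, $B/\mathfrak{m}=\mathbb{C}$; $B\widehat{\otimes}X=\varprojlim(B/\mathfrak{m}^k\otimes X)$. For a subspace $Y\subseteq B\widehat{\otimes}X$: $BY=\{\sum_{i\ge0}b_iy_i:y_i\in Y,b_i\in\mathfrak{m}^{k_i},k_i\to\infty\}$ (convergent series), $\mathfrak{m}^kY$ is the same set with all $k_i\ge k$, while $B\cdot Y$ and $\mathfrak{m}^k\cdot Y$ denote the finite spans of products $by$ with $b\in B$ (resp. $b\in\mathfrak{m}^k$) and $y\in Y$. $Y$ is pseudoclosed if $BY\subseteq Y$. *)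

theory Defs
  imports Complex_Main
begin

definition is_ideal :: "'b::comm_ring_1 set \<Rightarrow> bool" where
  "is_ideal I \<longleftrightarrow> 0 \<in> I \<and> (\<forall>x\<in>I. \<forall>y\<in>I. x + y \<in> I) \<and> (\<forall>a. \<forall>x\<in>I. a * x \<in> I)"

definition ideal_gen :: "'b::comm_ring_1 set \<Rightarrow> 'b set" where
  "ideal_gen F = {\<Sum>f\<in>G. c f * f | G c. finite G \<and> G \<subseteq> F}"

definition ideal_pow :: "'b::comm_ring_1 set \<Rightarrow> nat \<Rightarrow> 'b set" where
  "ideal_pow m k = ideal_gen {prod_list xs | xs. length xs = k \<and> set xs \<subseteq> m}"

definition is_maximal_ideal :: "'b::comm_ring_1 set \<Rightarrow> bool" where
  "is_maximal_ideal I \<longleftrightarrow> is_ideal I \<and> I \<noteq> UNIV \<and>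
     (\<forall>J. is_ideal J \<and> I \<subseteq> J \<longrightarrow> J = I \<or> J = UNIV)"

definition noetherian_ring :: "'b::comm_ring_1 itself \<Rightarrow> bool" where
  "noetherian_ring _ \<longleftrightarrow> (\<forall>I::'b set. is_ideal I \<longrightarrow> (\<exists>F. finite F \<and> I = ideal_gen F))"

definition madic_lim :: "'b::comm_ring_1 set \<Rightarrow> (nat \<Rightarrow> 'b) \<Rightarrow> 'b \<Rightarrow> bool" where
  "madic_lim m u l \<longleftrightarrow> (\<forall>k. \<exists>N. \<forall>n\<ge>N. l - u n \<in> ideal_pow m k)"

text \<open>B is m-adically complete and separated, i.e. B = lim B/m^k.\<close>
definition madic_complete :: "'b::comm_ring_1 set \<Rightarrow> bool" where
  "madic_complete m \<longleftrightarrow>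
     (\<Inter>k. ideal_pow m k) = {0} \<and>
     (\<forall>u. (\<forall>k. \<exists>N. \<forall>n\<ge>N. \<forall>n'\<ge>N. u n - u n' \<in> ideal_pow m k) \<longrightarrow> (\<exists>l. madic_lim m u l))"

text \<open>Deformation base: complete local Noetherian unital commutative C-algebra (B,m),
  with C-algebra structure given by the ring homomorphism iota, and B/m = C.\<close>
definition deformation_base :: "(complex \<Rightarrow> 'b::comm_ring_1) \<Rightarrow> 'b set \<Rightarrow> bool" where
  "deformation_base \<iota> m \<longleftrightarrow>
     (\<forall>a b. \<iota> (a + b) = \<iota> a + \<iota> b) \<and> (\<forall>a b. \<iota> (a * b) = \<iota> a * \<iota> b) \<and> \<iota> 1 = 1 \<and>
     is_maximal_ideal m \<and> (\<forall>I. is_maximal_ideal I \<longrightarrow> I = m) \<and>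
     noetherian_ring TYPE('b) \<and>
     (\<forall>b. \<exists>!c. b - \<iota> c \<in> m) \<and>
     madic_complete m"

text \<open>B/m^k \<otimes> X = finitely supported functions S \<rightarrow> B/m^k; the inverse limit consists of
  functions f : S \<rightarrow> B such that f mod m^k is finitely supported for every k.\<close>
definition ctensor :: "'b::comm_ring_1 set \<Rightarrow> 's set \<Rightarrow> ('s \<Rightarrow> 'b) set" where
  "ctensor m S = {f. (\<forall>s. s \<notin> S \<longrightarrow> f s = 0) \<and> (\<forall>k. finite {s\<in>S. f s \<notin> ideal_pow m k})}"

definition is_submodule :: "'b::comm_ring_1 set \<Rightarrow> 's set \<Rightarrow> ('s \<Rightarrow> 'b) set \<Rightarrow> bool" where
  "is_submodule m S Y \<longleftrightarrow> Y \<subseteq> ctensor m S \<and> (\<lambda>s. 0) \<in> Y \<and>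
     (\<forall>y\<in>Y. \<forall>z\<in>Y. (\<lambda>s. y s + z s) \<in> Y) \<and> (\<forall>b. \<forall>y\<in>Y. (\<lambda>s. b * y s) \<in> Y)"

definition series_sum :: "'b::comm_ring_1 set \<Rightarrow> (nat \<Rightarrow> 'b) \<Rightarrow> (nat \<Rightarrow> 's \<Rightarrow> 'b) \<Rightarrow> ('s \<Rightarrow> 'b) \<Rightarrow> bool" where
  "series_sum m b y z \<longleftrightarrow>
     (\<forall>k. \<exists>N. \<forall>n\<ge>N. \<forall>s. z s - (\<Sum>i<n. b i * y i s) \<in> ideal_pow m k)"

text \<open>m^k Y (convergent series, k_i \<ge> k, k_i \<rightarrow> \<infinity>); BY = m^0 Y.\<close>
definition pseries :: "'b::comm_ring_1 set \<Rightarrow> 's set \<Rightarrow> nat \<Rightarrow> ('s \<Rightarrow> 'b) set \<Rightarrow> ('s \<Rightarrow> 'b) set" where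
  "pseries m S k Y = {z \<in> ctensor m S. \<exists>b y kk. (\<forall>i. y i \<in> Y) \<and> (\<forall>i. kk i \<ge> k) \<and>
      (\<forall>i. b i \<in> ideal_pow m (kk i)) \<and> filterlim kk at_top sequentially \<and> series_sum m b y z}"

abbreviation pseriesB :: "'b::comm_ring_1 set \<Rightarrow> 's set \<Rightarrow> ('s \<Rightarrow> 'b) set \<Rightarrow> ('s \<Rightarrow> 'b) set" where
  "pseriesB m S Y \<equiv> pseries m S 0 Y"

text \<open>C \<cdot> Y: finite spans of products c y, c \<in> C, y \<in> Y.\<close>
definition fspan :: "'b::comm_ring_1 set \<Rightarrow> ('s \<Rightarrow> 'b) set \<Rightarrow> ('s \<Rightarrow> 'b) set" where
  "fspan C Y = {(\<lambda>s. \<Sum>i<n. c i * y i s) | (n::nat) c y. \<forall>i<n. c i \<in> C \<and> y i \<in> Y}"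

definition pseudoclosed :: "'b::comm_ring_1 set \<Rightarrow> 's set \<Rightarrow> ('s \<Rightarrow> 'b) set \<Rightarrow> bool" where
  "pseudoclosed m S Y \<longleftrightarrow> pseriesB m S Y \<subseteq> Y"

end

theory Submission
  imports Defs
begin

text \<open>A finite combination of elements of Y with coefficients in m^k is a series with zero
  tail. Conversely, B is Noetherian, so m^k is generated by finitely many f, and m^(k+j) is
  contained in m^k m^j; hence each coefficient b_i in m^(k_i) of a convergent series
  \<Sum> b_i y_i can be written as \<Sum>_f f c_if with c_if in m^(k_i - k). By completeness each
  series W_f = \<Sum>_i c_if y_i converges, so W_f lies in BY and hence in Y by pseudoclosedness;
  as B is m-adically separated, \<Sum> b_i y_i = \<Sum>_f f W_f, which lies in m^k\<cdot>Y.\<close>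

lemma is_ideal_zero: "is_ideal I \<Longrightarrow> 0 \<in> I"
  by (simp add: is_ideal_def)

lemma is_ideal_add: "is_ideal I \<Longrightarrow> x \<in> I \<Longrightarrow> y \<in> I \<Longrightarrow> x + y \<in> I"
  by (simp add: is_ideal_def)

lemma is_ideal_mult_left: "is_ideal I \<Longrightarrow> x \<in> I \<Longrightarrow> a * x \<in> I"
  by (simp add: is_ideal_def)

lemma is_ideal_mult_right: "is_ideal I \<Longrightarrow> x \<in> I \<Longrightarrow> x * a \<in> I"
  by (simp add: is_ideal_def mult.commute)

lemma is_ideal_diff: "is_ideal I \<Longrightarrow> x \<in> I \<Longrightarrow> y \<in> I \<Longrightarrow> x - y \<in> I"
  using is_ideal_add[of I x "(-1) * y"] is_ideal_mult_left[of I y "-1"] by simp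

lemma is_ideal_sum:
  assumes "is_ideal I" "\<And>x. x \<in> A \<Longrightarrow> g x \<in> I"
  shows "sum g A \<in> I"
  using assms(2)
  by (induction A rule: infinite_finite_induct) (auto intro: is_ideal_zero is_ideal_add assms(1))

lemma sum_mult_extend_coeffs:
  fixes c :: "'a \<Rightarrow> 'a::comm_ring_1"
  assumes "finite H" "G \<subseteq> H"
  shows "(\<Sum>f\<in>G. c f * f) = (\<Sum>f\<in>H. (if f \<in> G then c f else 0) * f)"
proof -
  have "(\<Sum>f\<in>H. (if f \<in> G then c f else 0) * f) = (\<Sum>f\<in>H. if f \<in> G then c f * f else 0)"
    by (rule sum.cong) auto
  also have "\<dots> = (\<Sum>f\<in>H \<inter> G. c f * f)"
    by (rule sum.inter_restrict[OF assms(1), symmetric])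
  finally show ?thesis
    using assms(2) by (simp add: Int_absorb1)
qed

lemma is_ideal_ideal_gen: "is_ideal (ideal_gen F)"
  unfolding is_ideal_def
proof (intro conjI ballI allI)
  show "0 \<in> ideal_gen F"
    unfolding ideal_gen_def by (intro CollectI exI[of _ "{}"]) simp
next
  fix x y assume "x \<in> ideal_gen F" "y \<in> ideal_gen F"
  then obtain G c H d where G: "finite G" "G \<subseteq> F" "x = (\<Sum>f\<in>G. c f * f)"
    and H: "finite H" "H \<subseteq> F" "y = (\<Sum>f\<in>H. d f * f)"
    unfolding ideal_gen_def by blast
  let ?e = "\<lambda>f. (if f \<in> G then c f else 0) + (if f \<in> H then d f else 0)"
  have "x + y = (\<Sum>f\<in>G \<union> H. ?e f * f)"
    using G H sum_mult_extend_coeffs[of "G \<union> H" G c] sum_mult_extend_coeffs[of "G \<union> H" H d]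
    by (simp add: distrib_right sum.distrib)
  moreover have "finite (G \<union> H)" "G \<union> H \<subseteq> F"
    using G H by auto
  ultimately show "x + y \<in> ideal_gen F"
    unfolding ideal_gen_def by (intro CollectI exI[of _ "G \<union> H"] exI[of _ ?e]) simp
next
  fix a x assume "x \<in> ideal_gen F"
  then obtain G c where G: "finite G" "G \<subseteq> F" "x = (\<Sum>f\<in>G. c f * f)"
    unfolding ideal_gen_def by blast
  have "a * x = (\<Sum>f\<in>G. (a * c f) * f)"
    using G(3) by (simp add: sum_distrib_left mult.assoc)
  with G(1,2) show "a * x \<in> ideal_gen F"
    unfolding ideal_gen_def by (intro CollectI exI[of _ G] exI[of _ "\<lambda>f. a * c f"]) simp
qed

lemma ideal_gen_superset: "F \<subseteq> ideal_gen F"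
proof
  fix x assume "x \<in> F"
  then show "x \<in> ideal_gen F"
    unfolding ideal_gen_def by (intro CollectI exI[of _ "{x}"] exI[of _ "\<lambda>_. 1"]) simp
qed

lemma ideal_gen_minimal:
  assumes "is_ideal I" "F \<subseteq> I"
  shows "ideal_gen F \<subseteq> I"
proof
  fix x assume "x \<in> ideal_gen F"
  then obtain G c where "G \<subseteq> F" "x = (\<Sum>f\<in>G. c f * f)"
    unfolding ideal_gen_def by blast
  with assms(2) show "x \<in> I"
    by (auto intro!: is_ideal_sum[OF assms(1)] is_ideal_mult_left[OF assms(1)])
qed

lemma ideal_gen_finite:
  assumes "finite F"
  shows "ideal_gen F = range (\<lambda>c. \<Sum>f\<in>F. c f * f)"
proof
  show "ideal_gen F \<subseteq> range (\<lambda>c. \<Sum>f\<in>F. c f * f)"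
  proof
    fix x assume "x \<in> ideal_gen F"
    then obtain G c where G: "G \<subseteq> F" "x = (\<Sum>f\<in>G. c f * f)"
      unfolding ideal_gen_def by blast
    then show "x \<in> range (\<lambda>c. \<Sum>f\<in>F. c f * f)"
      using sum_mult_extend_coeffs[OF assms G(1), of c]
      by (intro image_eqI[where x = "\<lambda>f. if f \<in> G then c f else 0"]) simp_all
  qed
  show "range (\<lambda>c. \<Sum>f\<in>F. c f * f) \<subseteq> ideal_gen F"
    unfolding ideal_gen_def using assms by auto
qed

lemma is_ideal_ideal_pow: "is_ideal (ideal_pow m k)"
  unfolding ideal_pow_def by (rule is_ideal_ideal_gen)

lemma prod_list_in_ideal_pow:
  "length xs = k \<Longrightarrow> set xs \<subseteq> m \<Longrightarrow> prod_list xs \<in> ideal_pow m k"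
  unfolding ideal_pow_def by (rule subsetD[OF ideal_gen_superset]) blast

lemma ideal_pow_0: "ideal_pow m 0 = UNIV"
  using is_ideal_mult_right[OF is_ideal_ideal_pow prod_list_in_ideal_pow[of "[]" 0 m]] by auto

lemma ideal_pow_Suc_subset: "ideal_pow m (Suc k) \<subseteq> ideal_pow m k"
  unfolding ideal_pow_def[of m "Suc k"]
proof (intro ideal_gen_minimal[OF is_ideal_ideal_pow] subsetI, clarify)
  fix xs :: "'a list" assume "length xs = Suc k" "set xs \<subseteq> m"
  then obtain x ys where "xs = x # ys" "length ys = k" "set ys \<subseteq> m"
    by (cases xs) auto
  then show "prod_list xs \<in> ideal_pow m k"
    using is_ideal_mult_left[OF is_ideal_ideal_pow prod_list_in_ideal_pow] by simp
qed

lemma ideal_pow_antimono: "k \<le> j \<Longrightarrow> ideal_pow m j \<subseteq> ideal_pow m k"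
  by (induction j rule: dec_induct) (use ideal_pow_Suc_subset in blast)+

lemma is_ideal_combinations:
  assumes "is_ideal J"
  shows "is_ideal {\<Sum>f\<in>F. f * c f | c. \<forall>f. c f \<in> J}" (is "is_ideal ?D")
  unfolding is_ideal_def
proof (intro conjI ballI allI)
  show "0 \<in> ?D"
    using is_ideal_zero[OF assms] by (intro CollectI exI[of _ "\<lambda>_. 0"]) simp
next
  fix x y assume "x \<in> ?D" "y \<in> ?D"
  then obtain c d where "\<forall>f. c f \<in> J" "x = (\<Sum>f\<in>F. f * c f)"
    and "\<forall>f. d f \<in> J" "y = (\<Sum>f\<in>F. f * d f)"
    by blast
  then show "x + y \<in> ?D"
    using is_ideal_add[OF assms]
    by (intro CollectI exI[of _ "\<lambda>f. c f + d f"]) (simp add: distrib_left sum.distrib)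
next
  fix a x assume "x \<in> ?D"
  then obtain c where c: "\<forall>f. c f \<in> J" "x = (\<Sum>f\<in>F. f * c f)"
    by blast
  then have "\<forall>f. a * c f \<in> J"
    using is_ideal_mult_left[OF assms] by blast
  with c show "a * x \<in> ?D"
    by (intro CollectI exI[of _ "\<lambda>f. a * c f"]) (simp add: sum_distrib_left algebra_simps)
qed

lemma ideal_pow_add_decompose:
  assumes "finite F" "ideal_pow m k = ideal_gen F" "b \<in> ideal_pow m (k + j)"
  shows "\<exists>c. (\<forall>f. c f \<in> ideal_pow m j) \<and> b = (\<Sum>f\<in>F. f * c f)"
proof -
  let ?D = "{\<Sum>f\<in>F. f * c f | c. \<forall>f. c f \<in> ideal_pow m j}"
  have "prod_list xs \<in> ?D" if xs: "length xs = k + j" "set xs \<subseteq> m" for xs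
  proof -
    have "prod_list (take k xs) \<in> ideal_pow m k"
      using xs by (intro prod_list_in_ideal_pow) (auto dest: in_set_takeD)
    then have "prod_list (take k xs) \<in> range (\<lambda>c. \<Sum>f\<in>F. c f * f)"
      using assms(2) ideal_gen_finite[OF assms(1)] by simp
    then obtain a where a: "prod_list (take k xs) = (\<Sum>f\<in>F. a f * f)"
      by blast
    have "prod_list (drop k xs) \<in> ideal_pow m j"
      using xs by (intro prod_list_in_ideal_pow) (auto dest: in_set_dropD)
    then have coeffs: "\<forall>f. a f * prod_list (drop k xs) \<in> ideal_pow m j"
      by (blast intro: is_ideal_mult_left[OF is_ideal_ideal_pow])
    have "prod_list xs = prod_list (take k xs) * prod_list (drop k xs)"
      by (metis append_take_drop_id prod_list.append)
    also have "\<dots> = (\<Sum>f\<in>F. f * (a f * prod_list (drop k xs)))"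
      unfolding a by (simp add: sum_distrib_left sum_distrib_right mult_ac)
    finally show ?thesis
      using coeffs by (intro CollectI exI[of _ "\<lambda>f. a f * prod_list (drop k xs)"]) simp
  qed
  then have "ideal_pow m (k + j) \<subseteq> ?D"
    unfolding ideal_pow_def[of m "k + j"]
    by (intro ideal_gen_minimal is_ideal_combinations is_ideal_ideal_pow) blast
  with assms(3) show ?thesis by blast
qed

lemma series_sum_eventually:
  "series_sum m b y z \<longleftrightarrow>
     (\<forall>k. \<forall>\<^sub>F n in sequentially. \<forall>s. z s - (\<Sum>i<n. b i * y i s) \<in> ideal_pow m k)"
  by (simp add: series_sum_def eventually_sequentially)

lemma partial_sums_diff_in_ideal_pow:
  fixes N n n' :: nat
  assumes "\<And>i. N \<le> i \<Longrightarrow> b i \<in> ideal_pow m k" "N \<le> n" "N \<le> n'"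
  shows "(\<Sum>i<n. b i * y i s) - (\<Sum>i<n'. b i * y i s) \<in> ideal_pow m k"
proof -
  have tail: "(\<Sum>i<n. b i * y i s) - (\<Sum>i<N. b i * y i s) \<in> ideal_pow m k" if "N \<le> n" for n
  proof -
    have "(\<Sum>i<n. b i * y i s) - (\<Sum>i<N. b i * y i s) = (\<Sum>i\<in>{N..<n}. b i * y i s)"
      using that sum_diff_nat_ivl[of 0 N n "\<lambda>i. b i * y i s"] by (simp add: atLeast0LessThan)
    also have "\<dots> \<in> ideal_pow m k"
      using assms(1) by (intro is_ideal_sum is_ideal_mult_right is_ideal_ideal_pow) auto
    finally show ?thesis .
  qed
  from is_ideal_diff[OF is_ideal_ideal_pow tail[OF assms(2)] tail[OF assms(3)]]
  show ?thesis by simp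
qed

lemma series_sum_exists:
  assumes "madic_complete m" "\<And>i. b i \<in> ideal_pow m (kk i)" "filterlim kk at_top sequentially"
  shows "\<exists>z. series_sum m b y z"
proof -
  define P where "P n s = (\<Sum>i<n. b i * y i s)" for n s
  have cauchy: "\<exists>N. \<forall>n\<ge>N. \<forall>n'\<ge>N. \<forall>s. P n s - P n' s \<in> ideal_pow m k" for k
  proof -
    obtain N where N: "\<And>i. N \<le> i \<Longrightarrow> k \<le> kk i"
      using assms(3) unfolding filterlim_at_top eventually_sequentially by blast
    have b_tail: "b i \<in> ideal_pow m k" if "N \<le> i" for i
      using assms(2)[of i] ideal_pow_antimono[OF N[OF that]] by blast
    show ?thesis
    proof (intro exI[of _ N] allI impI)
      fix n n' s assume "N \<le> n" "N \<le> n'"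
      with b_tail show "P n s - P n' s \<in> ideal_pow m k"
        unfolding P_def by (rule partial_sums_diff_in_ideal_pow)
    qed
  qed
  have "\<exists>l. madic_lim m (\<lambda>n. P n s) l" for s
  proof -
    have complete: "\<forall>u. (\<forall>k. \<exists>N. \<forall>n\<ge>N. \<forall>n'\<ge>N. u n - u n' \<in> ideal_pow m k) \<longrightarrow>
        (\<exists>l. madic_lim m u l)"
      using assms(1) unfolding madic_complete_def by (rule conjunct2)
    have "\<forall>k. \<exists>N. \<forall>n\<ge>N. \<forall>n'\<ge>N. P n s - P n' s \<in> ideal_pow m k"
      using cauchy by blast
    with spec[OF complete, of "\<lambda>n. P n s"] show ?thesis
      by blast
  qed
  then obtain z where z: "\<And>s. madic_lim m (\<lambda>n. P n s) (z s)"
    by metis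
  have "series_sum m b y z"
    unfolding series_sum_def
  proof
    fix k
    obtain N where N: "\<forall>n\<ge>N. \<forall>n'\<ge>N. \<forall>s. P n s - P n' s \<in> ideal_pow m k"
      using cauchy by blast
    have "z s - P n s \<in> ideal_pow m k" if "N \<le> n" for n s
    proof -
      obtain Ns where Ns: "\<forall>n\<ge>Ns. z s - P n s \<in> ideal_pow m k"
        using z unfolding madic_lim_def by blast
      have "(z s - P (max N Ns) s) + (P (max N Ns) s - P n s) \<in> ideal_pow m k"
        by (rule is_ideal_add[OF is_ideal_ideal_pow]) (use N Ns that in simp_all)
      then show ?thesis
        by simp
    qed
    then show "\<exists>N. \<forall>n\<ge>N. \<forall>s. z s - (\<Sum>i<n. b i * y i s) \<in> ideal_pow m k"
      unfolding P_def by blast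
  qed
  then show ?thesis
    by blast
qed

lemma series_sum_unique:
  assumes "(\<Inter>k. ideal_pow m k) = {0}" "series_sum m b y z" "series_sum m b y z'"
  shows "z = z'"
proof
  fix s
  have "z s - z' s \<in> ideal_pow m k" for k
  proof -
    obtain N N' where "\<forall>n\<ge>N. \<forall>s. z s - (\<Sum>i<n. b i * y i s) \<in> ideal_pow m k"
      and "\<forall>n\<ge>N'. \<forall>s. z' s - (\<Sum>i<n. b i * y i s) \<in> ideal_pow m k"
      using assms(2,3) unfolding series_sum_def by meson
    then have "z s - (\<Sum>i<max N N'. b i * y i s) \<in> ideal_pow m k"
      and "z' s - (\<Sum>i<max N N'. b i * y i s) \<in> ideal_pow m k"
      by simp_all
    from is_ideal_diff[OF is_ideal_ideal_pow this] show ?thesis by simp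
  qed
  then have "z s - z' s \<in> (\<Inter>k. ideal_pow m k)"
    by blast
  then show "z s = z' s"
    using assms(1) by simp
qed

lemma series_sum_in_ctensor:
  assumes "(\<Inter>k. ideal_pow m k) = {0}" "\<And>i. y i \<in> ctensor m S" "series_sum m b y z"
  shows "z \<in> ctensor m S"
  unfolding ctensor_def
proof (intro CollectI conjI allI impI)
  fix s assume "s \<notin> S"
  then have "y i s = 0" for i
    using assms(2) unfolding ctensor_def by blast
  have "z s \<in> ideal_pow m k" for k
  proof -
    obtain N where "\<forall>s. z s - (\<Sum>i<N. b i * y i s) \<in> ideal_pow m k"
      using assms(3) unfolding series_sum_def by blast
    then have "z s - (\<Sum>i<N. b i * y i s) \<in> ideal_pow m k"
      by blast
    with \<open>\<And>i. y i s = 0\<close> show ?thesis by simp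
  qed
  then have "z s \<in> (\<Inter>k. ideal_pow m k)"
    by blast
  then show "z s = 0"
    using assms(1) by simp
next
  fix k
  obtain N where N: "\<forall>s. z s - (\<Sum>i<N. b i * y i s) \<in> ideal_pow m k"
    using assms(3) unfolding series_sum_def by blast
  have "{s \<in> S. z s \<notin> ideal_pow m k} \<subseteq> (\<Union>i<N. {s \<in> S. y i s \<notin> ideal_pow m k})"
  proof (rule subsetI, rule ccontr)
    fix s assume s: "s \<in> {s \<in> S. z s \<notin> ideal_pow m k}"
      and "s \<notin> (\<Union>i<N. {s \<in> S. y i s \<notin> ideal_pow m k})"
    then have "\<forall>i<N. y i s \<in> ideal_pow m k"
      by blast
    then have "(z s - (\<Sum>i<N. b i * y i s)) + (\<Sum>i<N. b i * y i s) \<in> ideal_pow m k"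
      using N by (intro is_ideal_add is_ideal_sum is_ideal_mult_left is_ideal_ideal_pow) auto
    with s show False by simp
  qed
  moreover have "finite (\<Union>i<N. {s \<in> S. y i s \<notin> ideal_pow m k})"
    using assms(2) unfolding ctensor_def by auto
  ultimately show "finite {s \<in> S. z s \<notin> ideal_pow m k}"
    by (rule finite_subset)
qed

lemma series_sum_lincomb:
  assumes "finite F" "\<And>f. f \<in> F \<Longrightarrow> series_sum m (\<lambda>i. c i f) y (w f)"
  shows "series_sum m (\<lambda>i. \<Sum>f\<in>F. f * c i f) y (\<lambda>s. \<Sum>f\<in>F. f * w f s)"
  unfolding series_sum_eventually
proof
  fix k
  have "\<forall>f\<in>F. \<forall>\<^sub>F n in sequentially. \<forall>s. w f s - (\<Sum>i<n. c i f * y i s) \<in> ideal_pow m k"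
    using assms(2) unfolding series_sum_eventually by blast
  then have "\<forall>\<^sub>F n in sequentially. \<forall>f\<in>F. \<forall>s. w f s - (\<Sum>i<n. c i f * y i s) \<in> ideal_pow m k"
    by (rule eventually_ball_finite[OF assms(1)])
  then show "\<forall>\<^sub>F n in sequentially. \<forall>s.
      (\<Sum>f\<in>F. f * w f s) - (\<Sum>i<n. (\<Sum>f\<in>F. f * c i f) * y i s) \<in> ideal_pow m k"
  proof (rule eventually_mono, intro allI)
    fix n s assume n: "\<forall>f\<in>F. \<forall>s. w f s - (\<Sum>i<n. c i f * y i s) \<in> ideal_pow m k"
    have "(\<Sum>i<n. (\<Sum>f\<in>F. f * c i f) * y i s) = (\<Sum>i<n. \<Sum>f\<in>F. f * (c i f * y i s))"
      by (simp add: sum_distrib_right mult.assoc)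
    also have "\<dots> = (\<Sum>f\<in>F. f * (\<Sum>i<n. c i f * y i s))"
      by (subst sum.swap) (simp add: sum_distrib_left)
    finally have "(\<Sum>f\<in>F. f * w f s) - (\<Sum>i<n. (\<Sum>f\<in>F. f * c i f) * y i s)
        = (\<Sum>f\<in>F. f * (w f s - (\<Sum>i<n. c i f * y i s)))"
      by (simp add: right_diff_distrib sum_subtractf)
    also have "\<dots> \<in> ideal_pow m k"
      using n by (intro is_ideal_sum is_ideal_mult_left is_ideal_ideal_pow) auto
    finally show "(\<Sum>f\<in>F. f * w f s) - (\<Sum>i<n. (\<Sum>f\<in>F. f * c i f) * y i s) \<in> ideal_pow m k" .
  qed
qed

lemma fspan_subset_submodule:
  assumes "is_submodule m S Y"
  shows "fspan C Y \<subseteq> Y"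
proof
  fix z assume "z \<in> fspan C Y"
  then obtain n :: nat and c y where z: "z = (\<lambda>s. \<Sum>i<n. c i * y i s)" and y: "\<forall>i<n. y i \<in> Y"
    unfolding fspan_def by blast
  have "(\<lambda>s. \<Sum>i<n'. c i * y i s) \<in> Y" if "n' \<le> n" for n'
    using that
  proof (induction n')
    case 0
    then show ?case using assms unfolding is_submodule_def by simp
  next
    case (Suc n')
    then have "(\<lambda>s. (\<Sum>i<n'. c i * y i s) + c n' * y n' s) \<in> Y"
      using y assms unfolding is_submodule_def by simp
    then show ?case by simp
  qed
  then show "z \<in> Y"
    using z by simp
qed

lemma sum_in_fspan:
  assumes "finite F" "\<And>f. f \<in> F \<Longrightarrow> f \<in> C \<and> w f \<in> Y"
  shows "(\<lambda>s. \<Sum>f\<in>F. f * w f s) \<in> fspan C Y"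
proof -
  obtain fs where fs: "set fs = F" "distinct fs"
    using finite_distinct_list[OF assms(1)] by blast
  have "(\<Sum>f\<in>F. f * w f s) = (\<Sum>i<length fs. fs ! i * w (fs ! i) s)" for s
  proof -
    have "(\<Sum>f\<in>F. f * w f s) = sum_list (map (\<lambda>f. f * w f s) fs)"
      using fs by (metis sum.distinct_set_conv_list)
    also have "\<dots> = (\<Sum>i<length fs. fs ! i * w (fs ! i) s)"
      by (simp add: sum_list_sum_nth atLeast0LessThan)
    finally show ?thesis .
  qed
  moreover have "\<forall>i<length fs. fs ! i \<in> C \<and> w (fs ! i) \<in> Y"
    using fs(1) assms(2) by auto
  ultimately show ?thesis
    unfolding fspan_def
    by (intro CollectI exI[of _ "length fs"] exI[of _ "\<lambda>i. fs ! i"] exI[of _ "\<lambda>i. w (fs ! i)"]) simp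
qed

lemma series_sum_finite:
  assumes "\<And>i. n \<le> i \<Longrightarrow> b i = 0"
  shows "series_sum m b y (\<lambda>s. \<Sum>i<n. b i * y i s)"
  unfolding series_sum_def
proof (intro allI exI[of _ n] impI)
  fix k n' s assume "n \<le> n'"
  then have "(\<Sum>i<n'. b i * y i s) = (\<Sum>i<n. b i * y i s)"
    using assms by (intro sum.mono_neutral_right) auto
  then show "(\<Sum>i<n. b i * y i s) - (\<Sum>i<n'. b i * y i s) \<in> ideal_pow m k"
    using is_ideal_zero[OF is_ideal_ideal_pow] by simp
qed

lemma fspan_ideal_pow_subset_pseries:
  assumes "is_submodule m S Y"
  shows "fspan (ideal_pow m k) Y \<subseteq> pseries m S k Y"
proof
  fix z assume "z \<in> fspan (ideal_pow m k) Y"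
  moreover from this obtain n :: nat and c y where z: "z = (\<lambda>s. \<Sum>i<n. c i * y i s)"
    and cy: "\<forall>i<n. c i \<in> ideal_pow m k \<and> y i \<in> Y"
    unfolding fspan_def by blast
  ultimately have "z \<in> ctensor m S"
    using fspan_subset_submodule[OF assms] assms unfolding is_submodule_def by blast
  define b where "b i = (if i < n then c i else 0)" for i
  define y' where "y' i = (if i < n then y i else (\<lambda>s. 0))" for i
  define kk where "kk i = (if i < n then k else k + i)" for i
  have "z = (\<lambda>s. \<Sum>i<n. b i * y' i s)"
    unfolding z b_def y'_def by simp
  then have "series_sum m b y' z"
    using series_sum_finite[of n b m y'] by (simp add: b_def)
  moreover have "\<forall>i. y' i \<in> Y"
    using cy assms unfolding y'_def is_submodule_def by auto
  moreover have "\<forall>i. k \<le> kk i"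
    unfolding kk_def by simp
  moreover have "\<forall>i. b i \<in> ideal_pow m (kk i)"
    using cy is_ideal_zero[OF is_ideal_ideal_pow] unfolding b_def kk_def by auto
  moreover have "filterlim kk at_top sequentially"
    unfolding filterlim_at_top eventually_sequentially
  proof
    fix K show "\<exists>N. \<forall>i\<ge>N. K \<le> kk i"
      by (intro exI[of _ "max n K"]) (auto simp: kk_def)
  qed
  ultimately show "z \<in> pseries m S k Y"
    using \<open>z \<in> ctensor m S\<close> unfolding pseries_def by blast
qed

lemma pseries_eq_generator_combination:
  assumes "madic_complete m" "finite F" "ideal_pow m k = ideal_gen F"
    and "Y \<subseteq> ctensor m S" "z \<in> pseries m S k Y"
  shows "\<exists>W. (\<forall>f. W f \<in> pseriesB m S Y) \<and> z = (\<lambda>s. \<Sum>f\<in>F. f * W f s)"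
proof -
  obtain b y kk where y: "\<forall>i. y i \<in> Y" and kk: "\<forall>i. k \<le> kk i"
    and b: "\<forall>i. b i \<in> ideal_pow m (kk i)" and kk_lim: "filterlim kk at_top sequentially"
    and z: "series_sum m b y z"
    using assms(5) unfolding pseries_def by blast
  have sep: "(\<Inter>k. ideal_pow m k) = {0}"
    using assms(1) unfolding madic_complete_def by blast
  have "\<exists>c. (\<forall>f. c f \<in> ideal_pow m (kk i - k)) \<and> b i = (\<Sum>f\<in>F. f * c f)" for i
    using ideal_pow_add_decompose[OF assms(2,3), of "b i" "kk i - k"] b kk by simp
  then obtain c where c: "\<And>i f. c i f \<in> ideal_pow m (kk i - k)"
    and b_eq: "\<And>i. b i = (\<Sum>f\<in>F. f * c i f)"
    by metis
  have kk_k_lim: "filterlim (\<lambda>i. kk i - k) at_top sequentially"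
    by (rule filterlim_compose[OF filterlim_minus_const_nat_at_top kk_lim])
  have "\<exists>w. series_sum m (\<lambda>i. c i f) y w" for f
    by (rule series_sum_exists[OF assms(1) c[of _ f] kk_k_lim])
  then obtain W where W: "\<And>f. series_sum m (\<lambda>i. c i f) y (W f)"
    by metis
  have "W f \<in> pseriesB m S Y" for f
    unfolding pseries_def using y assms(4)
    by (intro CollectI conjI series_sum_in_ctensor[OF sep _ W] exI[of _ "\<lambda>i. c i f"]
        exI[of _ y] exI[of _ "\<lambda>i. kk i - k"] allI c kk_k_lim W) auto
  moreover have "b = (\<lambda>i. \<Sum>f\<in>F. f * c i f)"
    by (rule ext) (rule b_eq)
  then have "z = (\<lambda>s. \<Sum>f\<in>F. f * W f s)"
    using series_sum_unique[OF sep z] series_sum_lincomb[OF assms(2) W] by simp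
  ultimately show ?thesis
    by blast
qed

lemma pseries_subset_fspan_ideal_pow:
  assumes "madic_complete m" "noetherian_ring TYPE('b::comm_ring_1)"
    and "is_submodule m S Y" "pseudoclosed m S Y"
  shows "pseries m S k (Y :: ('s \<Rightarrow> 'b) set) \<subseteq> fspan (ideal_pow m k) Y"
proof
  fix z assume z: "z \<in> pseries m S k Y"
  obtain F where F: "finite F" "ideal_pow m k = ideal_gen F"
    using assms(2) is_ideal_ideal_pow unfolding noetherian_ring_def by blast
  have "Y \<subseteq> ctensor m S"
    using assms(3) unfolding is_submodule_def by blast
  then obtain W where W: "\<And>f. W f \<in> pseriesB m S Y" and z_eq: "z = (\<lambda>s. \<Sum>f\<in>F. f * W f s)"
    using pseries_eq_generator_combination[OF assms(1) F _ z] by blast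
  have "W f \<in> Y" for f
    using W assms(4) unfolding pseudoclosed_def by blast
  then show "z \<in> fspan (ideal_pow m k) Y"
    unfolding z_eq using F ideal_gen_superset by (auto intro!: sum_in_fspan)
qed

theorem lemma2p23:
  fixes \<iota> :: "complex \<Rightarrow> 'b::comm_ring_1" and m :: "'b set"
    and S :: "'s set" and Y :: "('s \<Rightarrow> 'b) set"
  assumes "deformation_base \<iota> m"
    and "is_submodule m S Y"
    and "pseudoclosed m S Y"
  shows "pseriesB m S Y = fspan UNIV Y \<and>
         (\<forall>k. pseries m S k Y = fspan (ideal_pow m k) Y)"
proof -
  have "madic_complete m" "noetherian_ring TYPE('b)"
    using assms(1) unfolding deformation_base_def by blast+
  then have "pseries m S k Y = fspan (ideal_pow m k) Y" for k
    using pseries_subset_fspan_ideal_pow fspan_ideal_pow_subset_pseries[OF assms(2)] assms(2,3)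
    by (intro subset_antisym)
  then show ?thesis
    by (simp add: ideal_pow_0)
qed

end
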